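(* There exist class $\mathcal{K}_\infty$ functions $\alpha_1,\alpha_2$ such that: $V(x)\ge\alpha_1(|x|)$ for all $x\in\mathbb{X}$; $V(x)\le\alpha_2(|x|)$ for all $x\in\mathbb{X}_f$; $V(f(x,\kappa(x)))\le V(x)-\alpha_1(|x|)$ for all $x\in\mathbb{X}$.
   Context: Consider the discrete-time controlled system $x^+=f(x,u)$ with state $x\in\mathbb{R}^{n}$ and control $u\in\mathbb{R}^{m}$, constraint sets $\mathbb{X}\subset\mathbb{R}^n$, $\mathbb{U}\subset\mathbb{R}^m$, $\mathbb{Y}\subset\mathbb{R}^p$, and a constraint function $h(x,u)\in\mathbb{R}^p$. A control $u$ is feasible at $x\in\mathbb{X}$ if $u\in\mathbb{U}$, $f(x,u)\in\mathbb{X}$ and $h(x,u)\in\mathbb{Y}$. A control sequence $(u(0),\ldots,u(N-1))$ is feasible from $x$ if, for the state sequence defined by $x(0)=x$ and $x(k+1)=f(x(k),u(k))$, each $u(k)$ is feasible at $x(k)$. We are given a stage cost $l(x,u)$, a terminal set $\mathbb{X}_f$ and a terminal cost $V_f$ defined on $\mathbb{X}_f$. Horizon-$N$ problem at $x$: minimize $\sum_{k=0}^{N-1}l(x(k),u(k))+V_f(x(N))$ over control sequences that are feasible from $x$ and satisfy $x(N)\in\mathbb{X}_f$. Let $V_N^0(x)$ be its minimum value, which is assumed to be attained whenever the feasible set is nonempty. Let $(u^0_N(0),\ldots,u^0_N(N-1))$ be a minimizer, and set $\kappa_N(x)=u_N^0(0)$. For $N=0$, $V_0^0(x)=V_f(x)$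 for $x\in\mathbb{X}_f$. Standing assumptions: (A1) $f,l,h,V_f$ are continuous on an open set containing $\mathbb{X}\times\mathbb{U}$ (for $V_f$, an open set containing $\mathbb{X}_f$). The stage cost $l$ is nonnegative definite in $(x,u)$ and positive definite in $u$. $V_f$ is positive definite on $\mathbb{X}_f$. Moreover $f(0,0)=0$, $l(0,0)=0$ and $V_f(0)=0$. (A2) $\mathbb{X}$ and $\mathbb{X}_f$ are closed, $\mathbb{X}_f\subset\mathbb{X}$, $\mathbb{U}$ is compact, and $\mathbb{X},\mathbb{X}_f,\mathbb{U}$ each contain a neighborhood of the origin. (A3) For every $x\in\mathbb{X}_f$ there is a control $u$ feasible at $x$ with $f(x,u)\in\mathbb{X}_f$ and $l(x,u)+V_f(f(x,u))\le V_f(x)$. (A4) For every $x\in\mathbb{X}$ there exist an integer $N\ge0$ and a feasible control sequence of length $N$ from $x$ whose state sequence satisfies $x(N)\in\mathbb{X}_f$. For $x\in\mathbb{X}$, $N(x)$ denotes the minimum such $N$. (A5) There is an integer $M\ge 0$ with $N(x)\le M$ for all $x\in\mathbb{X}$. (A6) There are class $\mathcal{K}_\infty$ functions $\alpha_1,\alpha_2$ with $l(x,u)\ge\alpha_1(|x|)$ for all $x\in\mathbb{X}$, $u\in\mathbb{U}$, and $V_f(x)\le\alpha_2(|x|)$ for all $x\in\mathbb{X}_f$. Define $V(x)=V^0_{N(x)}(x)$ for $x\in\mathbb{X}$. For $N(x)\ge1$ set $\kappa(x)=\kappa_{N(x)}(x)$. For $N(x)=0$ (equivalently $x\in\mathbb{X}_f$),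 let $\kappa(x)$ be a feasible control $u$ as in (A3). *)

theory Defs
  imports "HOL-Analysis.Analysis"
begin

definition Kinf :: "(real \<Rightarrow> real) \<Rightarrow> bool" where
  "Kinf \<alpha> \<longleftrightarrow> continuous_on {0..} \<alpha> \<and> \<alpha> 0 = 0 \<and> strict_mono_on {0..} \<alpha>
      \<and> filterlim \<alpha> at_top at_top"

definition feasible_ctrl ::
  "('a \<Rightarrow> 'b \<Rightarrow> 'a) \<Rightarrow> ('a \<Rightarrow> 'b \<Rightarrow> 'c) \<Rightarrow> 'a set \<Rightarrow> 'b set \<Rightarrow> 'c set \<Rightarrow> 'a \<Rightarrow> 'b \<Rightarrow> bool" where
  "feasible_ctrl f h X U Y x u \<longleftrightarrow> x \<in> X \<and> u \<in> U \<and> f x u \<in> X \<and> h x u \<in> Y"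

fun traj :: "('a \<Rightarrow> 'b \<Rightarrow> 'a) \<Rightarrow> 'a \<Rightarrow> (nat \<Rightarrow> 'b) \<Rightarrow> nat \<Rightarrow> 'a" where
  "traj f x us 0 = x"
| "traj f x us (Suc k) = f (traj f x us k) (us k)"

text \<open>Control sequence (only the first N entries matter) feasible from x.\<close>
definition feasible_seq ::
  "('a \<Rightarrow> 'b \<Rightarrow> 'a) \<Rightarrow> ('a \<Rightarrow> 'b \<Rightarrow> 'c) \<Rightarrow> 'a set \<Rightarrow> 'b set \<Rightarrow> 'c set \<Rightarrow> nat \<Rightarrow> 'a \<Rightarrow> (nat \<Rightarrow> 'b) \<Rightarrow> bool" where
  "feasible_seq f h X U Y N x us \<longleftrightarrow>
     (\<forall>k<N. feasible_ctrl f h X U Y (traj f x us k) (us k))"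

definition admissible ::
  "('a \<Rightarrow> 'b \<Rightarrow> 'a) \<Rightarrow> ('a \<Rightarrow> 'b \<Rightarrow> 'c) \<Rightarrow> 'a set \<Rightarrow> 'b set \<Rightarrow> 'c set \<Rightarrow> 'a set
     \<Rightarrow> nat \<Rightarrow> 'a \<Rightarrow> (nat \<Rightarrow> 'b) \<Rightarrow> bool" where
  "admissible f h X U Y Xf N x us \<longleftrightarrow>
     x \<in> X \<and> feasible_seq f h X U Y N x us \<and> traj f x us N \<in> Xf"

definition cost ::
  "('a \<Rightarrow> 'b \<Rightarrow> 'a) \<Rightarrow> ('a \<Rightarrow> 'b \<Rightarrow> real) \<Rightarrow> ('a \<Rightarrow> real) \<Rightarrow> nat \<Rightarrow> 'a \<Rightarrow> (nat \<Rightarrow> 'b) \<Rightarrow> real" where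
  "cost f l Vf N x us = (\<Sum>k<N. l (traj f x us k) (us k)) + Vf (traj f x us N)"

definition VN ::
  "('a \<Rightarrow> 'b \<Rightarrow> 'a) \<Rightarrow> ('a \<Rightarrow> 'b \<Rightarrow> 'c) \<Rightarrow> ('a \<Rightarrow> 'b \<Rightarrow> real) \<Rightarrow> ('a \<Rightarrow> real)
     \<Rightarrow> 'a set \<Rightarrow> 'b set \<Rightarrow> 'c set \<Rightarrow> 'a set \<Rightarrow> nat \<Rightarrow> 'a \<Rightarrow> real" where
  "VN f h l Vf X U Y Xf N x = Inf (cost f l Vf N x ` {us. admissible f h X U Y Xf N x us})"

definition is_opt ::
  "('a \<Rightarrow> 'b \<Rightarrow> 'a) \<Rightarrow> ('a \<Rightarrow> 'b \<Rightarrow> 'c) \<Rightarrow> ('a \<Rightarrow> 'b \<Rightarrow> real) \<Rightarrow> ('a \<Rightarrow> real)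
     \<Rightarrow> 'a set \<Rightarrow> 'b set \<Rightarrow> 'c set \<Rightarrow> 'a set \<Rightarrow> nat \<Rightarrow> 'a \<Rightarrow> (nat \<Rightarrow> 'b) \<Rightarrow> bool" where
  "is_opt f h l Vf X U Y Xf N x us \<longleftrightarrow> admissible f h X U Y Xf N x us \<and>
     (\<forall>vs. admissible f h X U Y Xf N x vs \<longrightarrow> cost f l Vf N x us \<le> cost f l Vf N x vs)"

definition Nmin ::
  "('a \<Rightarrow> 'b \<Rightarrow> 'a) \<Rightarrow> ('a \<Rightarrow> 'b \<Rightarrow> 'c) \<Rightarrow> 'a set \<Rightarrow> 'b set \<Rightarrow> 'c set \<Rightarrow> 'a set \<Rightarrow> 'a \<Rightarrow> nat" where
  "Nmin f h X U Y Xf x = (LEAST N. \<exists>us. admissible f h X U Y Xf N x us)"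

definition Vfun ::
  "('a \<Rightarrow> 'b \<Rightarrow> 'a) \<Rightarrow> ('a \<Rightarrow> 'b \<Rightarrow> 'c) \<Rightarrow> ('a \<Rightarrow> 'b \<Rightarrow> real) \<Rightarrow> ('a \<Rightarrow> real)
     \<Rightarrow> 'a set \<Rightarrow> 'b set \<Rightarrow> 'c set \<Rightarrow> 'a set \<Rightarrow> 'a \<Rightarrow> real" where
  "Vfun f h l Vf X U Y Xf x = VN f h l Vf X U Y Xf (Nmin f h X U Y Xf x) x"

end

theory Submission
  imports Defs
begin

text \<open>Dynamic programming along the first step. If \<open>x\<close> needs \<open>N(x) = m + 1 \<ge> 1\<close> steps and
  \<open>u\<^sup>0\<close> is optimal for that horizon, the tail of \<open>u\<^sup>0\<close> is admissible from \<open>x\<^sup>+ = f(x, u\<^sup>0(0))\<close>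
  with horizon \<open>m\<close>, and \<open>N(x\<^sup>+) = m\<close> because prepending \<open>u\<^sup>0(0)\<close> to a shorter admissible sequence
  would beat the minimality of \<open>N(x)\<close>. Hence \<open>V(x\<^sup>+) \<le> V(x) - l(x, u\<^sup>0(0))\<close>. If \<open>N(x) = 0\<close>, then
  \<open>x \<in> X\<^sub>f\<close>, \<open>V = V\<^sub>f\<close> at \<open>x\<close> and at the successor, and the decrease is (A3). Since \<open>V \<ge> 0\<close>, the
  decrease also gives \<open>V(x) \<ge> l(x, \<kappa>(x)) \<ge> \<alpha>\<^sub>1(|x|)\<close>, and on \<open>X\<^sub>f\<close> we have \<open>V = V\<^sub>f \<le> \<alpha>\<^sub>2(|x|)\<close>.\<close>

lemma traj_Suc_shift:
  "traj f x us (Suc k) = traj f (f x (us 0)) (\<lambda>k. us (Suc k)) k"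
  by (induction k) auto

lemma admissible_Suc_iff:
  "admissible f h X U Y Xf (Suc N) x us \<longleftrightarrow>
     feasible_ctrl f h X U Y x (us 0) \<and>
     admissible f h X U Y Xf N (f x (us 0)) (\<lambda>k. us (Suc k))"
  unfolding admissible_def feasible_seq_def feasible_ctrl_def
  by (auto simp: All_less_Suc2 traj_Suc_shift simp del: traj.simps(2))

lemma admissible_case_nat:
  assumes "feasible_ctrl f h X U Y x u" "admissible f h X U Y Xf N (f x u) vs"
  shows "admissible f h X U Y Xf (Suc N) x (case_nat u vs)"
  using assms by (simp add: admissible_Suc_iff)

lemma cost_Suc:
  "cost f l Vf (Suc N) x us = l x (us 0) + cost f l Vf N (f x (us 0)) (\<lambda>k. us (Suc k))"
  unfolding cost_def sum.lessThan_Suc_shift traj_Suc_shift by simp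

lemma admissible_0_iff: "Xf \<subseteq> X \<Longrightarrow> admissible f h X U Y Xf 0 x us \<longleftrightarrow> x \<in> Xf"
  unfolding admissible_def feasible_seq_def by auto

lemma admissible_Nmin:
  assumes "admissible f h X U Y Xf N x us"
  obtains vs where "admissible f h X U Y Xf (Nmin f h X U Y Xf x) x vs"
  using LeastI_ex[of "\<lambda>N. \<exists>us. admissible f h X U Y Xf N x us"] assms
  unfolding Nmin_def by blast

lemma Nmin_le:
  "admissible f h X U Y Xf N x us \<Longrightarrow> Nmin f h X U Y Xf x \<le> N"
  unfolding Nmin_def by (blast intro: Least_le)

lemma Nmin_eq_0: "Xf \<subseteq> X \<Longrightarrow> x \<in> Xf \<Longrightarrow> Nmin f h X U Y Xf x = 0"
  using Nmin_le[of f h X U Y Xf 0 x] by (simp add: admissible_0_iff)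

lemma Nmin_successor:
  assumes "Nmin f h X U Y Xf x = Suc m" "admissible f h X U Y Xf (Suc m) x us"
  shows "Nmin f h X U Y Xf (f x (us 0)) = m"
proof -
  let ?x = "f x (us 0)"
  have feas: "feasible_ctrl f h X U Y x (us 0)"
    and tail: "admissible f h X U Y Xf m ?x (\<lambda>k. us (Suc k))"
    using assms(2) by (simp_all add: admissible_Suc_iff)
  obtain vs where "admissible f h X U Y Xf (Nmin f h X U Y Xf ?x) ?x vs"
    using tail by (rule admissible_Nmin)
  then have "Suc m \<le> Suc (Nmin f h X U Y Xf ?x)"
    using assms(1) Nmin_le admissible_case_nat[OF feas] by metis
  with Nmin_le[OF tail] show ?thesis by simp
qed

lemma VN_0: "Xf \<subseteq> X \<Longrightarrow> x \<in> Xf \<Longrightarrow> VN f h l Vf X U Y Xf 0 x = Vf x"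
  by (simp add: VN_def cost_def admissible_0_iff)

lemma Vfun_terminal: "Xf \<subseteq> X \<Longrightarrow> x \<in> Xf \<Longrightarrow> Vfun f h l Vf X U Y Xf x = Vf x"
  by (simp add: Vfun_def Nmin_eq_0 VN_0)

lemma VN_eq_cost_opt:
  "is_opt f h l Vf X U Y Xf N x us \<Longrightarrow> VN f h l Vf X U Y Xf N x = cost f l Vf N x us"
  unfolding VN_def is_opt_def by (rule cInf_eq_minimum) auto

context
  fixes f :: "'a \<Rightarrow> 'b \<Rightarrow> 'a" and h :: "'a \<Rightarrow> 'b \<Rightarrow> 'c"
    and l :: "'a \<Rightarrow> 'b \<Rightarrow> real" and Vf :: "'a \<Rightarrow> real"
    and X Xf :: "'a set" and U :: "'b set" and Y :: "'c set"
  assumes l_nonneg: "\<forall>x\<in>X. \<forall>u\<in>U. 0 \<le> l x u"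
    and Vf_nonneg: "\<forall>x\<in>Xf. 0 \<le> Vf x"
begin

lemma cost_nonneg:
  assumes "admissible f h X U Y Xf N x us"
  shows "0 \<le> cost f l Vf N x us"
proof -
  have "\<forall>k<N. 0 \<le> l (traj f x us k) (us k)"
    using assms l_nonneg unfolding admissible_def feasible_seq_def feasible_ctrl_def by blast
  then have "0 \<le> (\<Sum>k<N. l (traj f x us k) (us k))" by (intro sum_nonneg) auto
  moreover have "0 \<le> Vf (traj f x us N)" using assms Vf_nonneg unfolding admissible_def by blast
  ultimately show ?thesis unfolding cost_def by simp
qed

lemma VN_le_cost:
  "admissible f h X U Y Xf N x us \<Longrightarrow> VN f h l Vf X U Y Xf N x \<le> cost f l Vf N x us"
  unfolding VN_def bdd_below_def by (rule cInf_lower) (auto intro: cost_nonneg)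

lemma Vfun_nonneg:
  assumes "admissible f h X U Y Xf N x us"
  shows "0 \<le> Vfun f h l Vf X U Y Xf x"
proof -
  obtain vs where "admissible f h X U Y Xf (Nmin f h X U Y Xf x) x vs"
    using assms by (rule admissible_Nmin)
  then show ?thesis
    unfolding Vfun_def VN_def by (intro cInf_greatest) (auto intro: cost_nonneg)
qed

lemma Vfun_decrease_optimal:
  assumes "Nmin f h X U Y Xf x = Suc m" "is_opt f h l Vf X U Y Xf (Suc m) x us"
  shows "Vfun f h l Vf X U Y Xf (f x (us 0)) + l x (us 0) \<le> Vfun f h l Vf X U Y Xf x"
proof -
  let ?x = "f x (us 0)" and ?tail = "\<lambda>k. us (Suc k)"
  have adm: "admissible f h X U Y Xf (Suc m) x us" using assms(2) by (simp add: is_opt_def)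
  then have tail: "admissible f h X U Y Xf m ?x ?tail" by (simp add: admissible_Suc_iff)
  have "Vfun f h l Vf X U Y Xf ?x = VN f h l Vf X U Y Xf m ?x"
    by (simp add: Vfun_def Nmin_successor[OF assms(1) adm])
  also have "\<dots> \<le> cost f l Vf m ?x ?tail" using tail by (rule VN_le_cost)
  also have "\<dots> = Vfun f h l Vf X U Y Xf x - l x (us 0)"
    by (simp add: Vfun_def assms(1) VN_eq_cost_opt[OF assms(2)] cost_Suc)
  finally show ?thesis by simp
qed

lemma Vfun_decrease:
  assumes "Xf \<subseteq> X" "admissible f h X U Y Xf N x us"
    and optimal: "Nmin f h X U Y Xf x \<ge> 1 \<Longrightarrow>
      \<exists>us. is_opt f h l Vf X U Y Xf (Nmin f h X U Y Xf x) x us \<and> u = us 0"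
    and terminal: "Nmin f h X U Y Xf x = 0 \<Longrightarrow>
      feasible_ctrl f h X U Y x u \<and> f x u \<in> Xf \<and> l x u + Vf (f x u) \<le> Vf x"
  shows "feasible_ctrl f h X U Y x u \<and>
    Vfun f h l Vf X U Y Xf (f x u) + l x u \<le> Vfun f h l Vf X U Y Xf x"
proof (cases "Nmin f h X U Y Xf x")
  case 0
  obtain vs where "admissible f h X U Y Xf 0 x vs"
    using assms(2) 0 by (metis admissible_Nmin)
  then have "x \<in> Xf" using assms(1) by (simp add: admissible_0_iff)
  then show ?thesis using terminal[OF 0] assms(1) by (auto simp: Vfun_terminal)
next
  case (Suc m)
  then obtain vs where opt: "is_opt f h l Vf X U Y Xf (Suc m) x vs" and "u = vs 0"
    using optimal by auto
  then show ?thesis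
    using Vfun_decrease_optimal[OF Suc opt] by (simp add: is_opt_def admissible_Suc_iff)
qed

end

theorem proposition1:
  fixes f :: "'a::euclidean_space \<Rightarrow> 'b::euclidean_space \<Rightarrow> 'a"
    and h :: "'a \<Rightarrow> 'b \<Rightarrow> 'c::euclidean_space"
    and l :: "'a \<Rightarrow> 'b \<Rightarrow> real"
    and Vf :: "'a \<Rightarrow> real"
    and X Xf :: "'a set" and U :: "'b set" and Y :: "'c set"
    and \<kappa> :: "'a \<Rightarrow> 'b"
  assumes A1_f: "\<exists>W. open W \<and> X \<times> U \<subseteq> W \<and> continuous_on W (\<lambda>(x, u). f x u)"
    and A1_l: "\<exists>W. open W \<and> X \<times> U \<subseteq> W \<and> continuous_on W (\<lambda>(x, u). l x u)"
    and A1_h: "\<exists>W. open W \<and> X \<times> U \<subseteq> W \<and> continuous_on W (\<lambda>(x, u). h x u)"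
    and A1_Vf: "\<exists>W. open W \<and> Xf \<subseteq> W \<and> continuous_on W Vf"
    and A1_l_nonneg: "\<forall>x\<in>X. \<forall>u\<in>U. l x u \<ge> 0"
    and A1_l_posdef_u: "\<forall>x\<in>X. \<forall>u\<in>U. u \<noteq> 0 \<longrightarrow> l x u > 0"
    and A1_Vf_posdef: "\<forall>x\<in>Xf. Vf x \<ge> 0 \<and> (x \<noteq> 0 \<longrightarrow> Vf x > 0)"
    and A1_zero: "f 0 0 = 0" "l 0 0 = 0" "Vf 0 = 0"
    and A2: "closed X" "closed Xf" "Xf \<subseteq> X" "compact U"
      "0 \<in> interior X" "0 \<in> interior Xf" "0 \<in> interior U"
    and A3: "\<forall>x\<in>Xf. \<exists>u. feasible_ctrl f h X U Y x u \<and> f x u \<in> Xf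
               \<and> l x u + Vf (f x u) \<le> Vf x"
    and A4: "\<forall>x\<in>X. \<exists>N us. admissible f h X U Y Xf N x us"
    and A5: "\<exists>M. \<forall>x\<in>X. Nmin f h X U Y Xf x \<le> M"
    and A6: "\<exists>\<alpha>1 \<alpha>2. Kinf \<alpha>1 \<and> Kinf \<alpha>2 \<and> (\<forall>x\<in>X. \<forall>u\<in>U. l x u \<ge> \<alpha>1 (norm x))
               \<and> (\<forall>x\<in>Xf. Vf x \<le> \<alpha>2 (norm x))"
    and attained: "\<forall>N x. (\<exists>us. admissible f h X U Y Xf N x us)
               \<longrightarrow> (\<exists>us. is_opt f h l Vf X U Y Xf N x us)"
    and kappa_opt: "\<forall>x\<in>X. Nmin f h X U Y Xf x \<ge> 1 \<longrightarrow>
               (\<exists>us. is_opt f h l Vf X U Y Xf (Nmin f h X U Y Xf x) x us \<and> \<kappa> x = us 0)"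
    and kappa_term: "\<forall>x\<in>X. Nmin f h X U Y Xf x = 0 \<longrightarrow>
               feasible_ctrl f h X U Y x (\<kappa> x) \<and> f x (\<kappa> x) \<in> Xf
               \<and> l x (\<kappa> x) + Vf (f x (\<kappa> x)) \<le> Vf x"
  shows "\<exists>\<alpha>1 \<alpha>2. Kinf \<alpha>1 \<and> Kinf \<alpha>2
     \<and> (\<forall>x\<in>X. Vfun f h l Vf X U Y Xf x \<ge> \<alpha>1 (norm x))
     \<and> (\<forall>x\<in>Xf. Vfun f h l Vf X U Y Xf x \<le> \<alpha>2 (norm x))
     \<and> (\<forall>x\<in>X. Vfun f h l Vf X U Y Xf (f x (\<kappa> x))
                 \<le> Vfun f h l Vf X U Y Xf x - \<alpha>1 (norm x))"
proof -
  obtain \<alpha>1 \<alpha>2 where K: "Kinf \<alpha>1" "Kinf \<alpha>2"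
    and l_lower: "\<forall>x\<in>X. \<forall>u\<in>U. l x u \<ge> \<alpha>1 (norm x)" and Vf_upper: "\<forall>x\<in>Xf. Vf x \<le> \<alpha>2 (norm x)"
    using A6 by blast
  let ?V = "Vfun f h l Vf X U Y Xf"
  have Vf_nonneg: "\<forall>x\<in>Xf. 0 \<le> Vf x" using A1_Vf_posdef by blast
  have "?V (f x (\<kappa> x)) \<le> ?V x - \<alpha>1 (norm x) \<and> \<alpha>1 (norm x) \<le> ?V x" if x: "x \<in> X" for x
  proof -
    obtain N us where "admissible f h X U Y Xf N x us" using A4 x by blast
    then have step: "feasible_ctrl f h X U Y x (\<kappa> x) \<and> ?V (f x (\<kappa> x)) + l x (\<kappa> x) \<le> ?V x"
      using Vfun_decrease[OF A1_l_nonneg Vf_nonneg A2(3)] kappa_opt kappa_term x by blast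
    then have "\<alpha>1 (norm x) \<le> l x (\<kappa> x)" using l_lower x by (auto simp: feasible_ctrl_def)
    moreover obtain N' us' where "admissible f h X U Y Xf N' (f x (\<kappa> x)) us'"
      using A4 step by (auto simp: feasible_ctrl_def)
    then have "0 \<le> ?V (f x (\<kappa> x))" by (rule Vfun_nonneg[OF A1_l_nonneg Vf_nonneg])
    ultimately show ?thesis using step by linarith
  qed
  moreover have "?V x \<le> \<alpha>2 (norm x)" if "x \<in> Xf" for x
    using that Vf_upper A2(3) by (simp add: Vfun_terminal)
  ultimately show ?thesis using K by blast
qed

end
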